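(* Let $n\ge2$, $\delta>0$, $d_0>0$, and $f,g:\mathbb{R}^3\to\mathbb{R}$ sufficiently smooth. Consider the $n$-patch model with identical diffusion rates, for $j\in\Omega=\{1,\dots,n\}$, $$\dot u_j=\delta d_0\sum_{i\in\Omega}(u_i-u_j)+f(u_j,v_j,\alpha),\qquad \dot v_j=\delta d_0\sum_{i\in\Omega}(v_i-v_j)+g(u_j,v_j,\alpha)$$ (i.e. the model with $\delta\sum_i(d_{11}(u_i-u_j)+d_{12}(v_i-v_j))$ and $\delta\sum_i(d_{21}(u_i-u_j)+d_{22}(v_i-v_j))$ where $d_{11}=d_{22}=d_0$, $d_{12}=d_{21}=0$). Suppose the kinetic system $\dot u=f(u,v,\alpha_0)$, $\dot v=g(u,v,\alpha_0)$ has a stable periodic solution $\psi(t)=(u_0(t),v_0(t))$ with minimum period $p>0$ whose Floquet multipliers are $\gamma=1$ and $\tilde\gamma\in(0,1)$. Then, with $\alpha=\alpha_0$, for sufficiently small $\delta>0$ the synchronous periodic solution $(\psi(t),\dots,\psi(t))^T$ is stable with respect to the patch model. *)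

theory Defs
  imports "HOL-Analysis.Analysis" "HOL-Computational_Algebra.Polynomial"
begin

definition C1_fun3 :: "(real \<Rightarrow> real \<Rightarrow> real \<Rightarrow> real) \<Rightarrow> bool" where
  "C1_fun3 h \<longleftrightarrow> (\<exists>D :: real^3 \<Rightarrow> ((real^3) \<Rightarrow>\<^sub>L real).
      (\<forall>x. ((\<lambda>y. h (y$1) (y$2) (y$3)) has_derivative blinfun_apply (D x)) (at x))
      \<and> continuous_on UNIV D)"

definition kinetic_field ::
  "(real \<Rightarrow> real \<Rightarrow> real \<Rightarrow> real) \<Rightarrow> (real \<Rightarrow> real \<Rightarrow> real \<Rightarrow> real) \<Rightarrow> real \<Rightarrow> real^2 \<Rightarrow> real^2" where
  "kinetic_field f g \<alpha> x = vector [f (x$1) (x$2) \<alpha>, g (x$1) (x$2) \<alpha>]"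

text \<open>n-patch model with identical diffusion rates d11 = d22 = d0, d12 = d21 = 0.
  Patches are the elements of the finite type 'n; state component (j,1) is u_j, (j,2) is v_j.\<close>
definition patch_field ::
  "real \<Rightarrow> real \<Rightarrow> (real \<Rightarrow> real \<Rightarrow> real \<Rightarrow> real) \<Rightarrow> (real \<Rightarrow> real \<Rightarrow> real \<Rightarrow> real) \<Rightarrow> real
    \<Rightarrow> real^('n::finite \<times> 2) \<Rightarrow> real^('n \<times> 2)" where
  "patch_field \<delta> d0 f g \<alpha> x = (\<chi> jk. let j = fst jk; k = snd jk in
     (if k = 1
      then \<delta> * d0 * (\<Sum>i\<in>UNIV. x$(i,1) - x$(j,1)) + f (x$(j,1)) (x$(j,2)) \<alpha>
      else \<delta> * d0 * (\<Sum>i\<in>UNIV. x$(i,2) - x$(j,2)) + g (x$(j,1)) (x$(j,2)) \<alpha>))"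

definition synchronous :: "(real \<Rightarrow> real^2) \<Rightarrow> real \<Rightarrow> real^('n::finite \<times> 2)" where
  "synchronous \<psi> t = (\<chi> jk. \<psi> t $ snd jk)"

definition periodic_solution :: "('a::euclidean_space \<Rightarrow> 'a) \<Rightarrow> (real \<Rightarrow> 'a) \<Rightarrow> real \<Rightarrow> bool" where
  "periodic_solution F \<psi> p \<longleftrightarrow>
     p > 0 \<and> (\<forall>t. (\<psi> has_vector_derivative F (\<psi> t)) (at t))
     \<and> (\<forall>t. \<psi> (t + p) = \<psi> t)
     \<and> (\<forall>q. 0 < q \<and> q < p \<longrightarrow> \<not> (\<forall>t. \<psi> (t + q) = \<psi> t))"

definition fundamental_matrix ::
  "(real^'m \<Rightarrow> real^'m) \<Rightarrow> (real \<Rightarrow> real^'m) \<Rightarrow> (real \<Rightarrow> real^'m^'m) \<Rightarrow> bool" where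
  "fundamental_matrix F \<psi> \<Phi> \<longleftrightarrow>
     \<Phi> 0 = mat 1 \<and>
     (\<forall>t. (\<Phi> has_vector_derivative (matrix (frechet_derivative F (at (\<psi> t))) ** \<Phi> t)) (at t))"

definition char_det :: "real^'m^'m \<Rightarrow> complex \<Rightarrow> complex" where
  "char_det M z = det ((\<chi> i j. (if i = j then z else 0) - complex_of_real (M$i$j)) :: complex^'m^'m)"

text \<open>The Floquet multipliers (roots of the characteristic polynomial of the monodromy
  matrix Phi(p), with algebraic multiplicity) are given by the roots of P.\<close>
definition floquet_char ::
  "(real^'m \<Rightarrow> real^'m) \<Rightarrow> (real \<Rightarrow> real^'m) \<Rightarrow> real \<Rightarrow> (complex \<Rightarrow> complex) \<Rightarrow> bool" where
  "floquet_char F \<psi> p P \<longleftrightarrow>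
     (\<exists>\<Phi>. fundamental_matrix F \<psi> \<Phi> \<and> (\<forall>z. char_det (\<Phi> p) z = P z))"

definition floquet_stable :: "(real^'m \<Rightarrow> real^'m) \<Rightarrow> (real \<Rightarrow> real^'m) \<Rightarrow> real \<Rightarrow> bool" where
  "floquet_stable F \<psi> p \<longleftrightarrow>
     (\<exists>q :: complex poly. floquet_char F \<psi> p (\<lambda>z. (z - 1) * poly q z)
        \<and> (\<forall>z. poly q z = 0 \<longrightarrow> cmod z < 1))"

end

theory Submission
  imports Defs
begin

text \<open>With identical diffusion rates the linearisation of the patch model along the synchronous
  solution is \<open>y' = (L \<otimes> I + I \<otimes> A(t)) y\<close>, where \<open>A(t)\<close> is the Jacobian of the kinetic field
  along \<open>\<psi>\<close> and \<open>L = \<delta> d0 (J - n I)\<close> with \<open>J\<close> the all-ones matrix. Since the two summands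
  commute, \<open>e\<^sup>t\<^sup>L \<otimes> \<Phi>(t)\<close> is a fundamental matrix, so the Floquet multipliers of the synchronous
  solution are the products of the eigenvalues of \<open>e\<^sup>p\<^sup>L\<close> (namely \<open>1\<close> once and
  \<open>a = exp (- n \<delta> d0 p)\<close> with multiplicity \<open>n - 1\<close>) with the multipliers \<open>1, \<gamma>\<close> of \<open>\<psi>\<close>.
  The eigenvalue products are read off after triangularising both factors. Apart from the
  trivial multiplier \<open>1\<close>, the multipliers \<open>\<gamma>, a, a \<gamma>\<close> lie in \<open>(0, 1)\<close> for every \<open>\<delta> > 0\<close>,
  so no smallness of \<open>\<delta>\<close> is needed.\<close>

section \<open>Componentwise derivatives of vectors\<close>

lemma norm_axis: "norm (axis i x) = norm (x :: 'a::real_normed_vector)"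
proof -
  have "(\<Sum>j\<in>UNIV. (norm (axis i x $ j))\<^sup>2) = (\<Sum>j\<in>UNIV. if j = i then (norm x)\<^sup>2 else 0)"
    by (rule sum.cong) (auto simp: axis_def)
  then show ?thesis by (simp add: norm_vec_def L2_set_def)
qed

lemma bounded_linear_axis: "bounded_linear (axis i :: 'a::real_normed_vector \<Rightarrow> 'a^'n::finite)"
proof (rule bounded_linear_intro[where K=1])
  show "norm (axis i x) \<le> norm x * 1" for x :: 'a
    by (simp add: norm_axis)
qed (simp_all add: axis_def vec_eq_iff)

lemma vec_lambda_sum_axis: "(\<chi> i. f i) = (\<Sum>i\<in>UNIV. axis i (f i) :: 'a::comm_monoid_add^'n::finite)"
  by (simp add: vec_eq_iff axis_def if_distrib cong: if_cong)

lemma has_derivative_vec_lambda: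
  fixes f :: "'a::real_normed_vector \<Rightarrow> 'i::finite \<Rightarrow> 'b::real_normed_vector"
  assumes "\<And>i. ((\<lambda>x. f x i) has_derivative (\<lambda>h. f' h i)) F"
  shows "((\<lambda>x. \<chi> i. f x i) has_derivative (\<lambda>h. \<chi> i. f' h i)) F"
  unfolding vec_lambda_sum_axis
  by (intro has_derivative_sum bounded_linear.has_derivative[OF bounded_linear_axis] assms)

lemma has_vector_derivative_vec_lambda:
  assumes "\<And>i. ((\<lambda>t. f t i) has_vector_derivative f' i) F"
  shows "((\<lambda>t. \<chi> i. f t i) has_vector_derivative (\<chi> i. f' i)) F"
proof -
  have "(\<lambda>h. \<chi> i. h *\<^sub>R f' i) = (\<lambda>h. h *\<^sub>R (\<chi> i. f' i))"
    by (simp add: fun_eq_iff vec_eq_iff)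
  then show ?thesis
    using has_derivative_vec_lambda[of "\<lambda>t i. f t i" "\<lambda>h i. h *\<^sub>R f' i"] assms
    by (simp add: has_vector_derivative_def)
qed

lemma has_vector_derivative_vec_nth:
  "(f has_vector_derivative f') F \<Longrightarrow> ((\<lambda>t. f t $ i) has_vector_derivative f' $ i) F"
  by (rule bounded_linear.has_vector_derivative[OF bounded_linear_vec_nth])

lemma has_vector_derivative_matrix_nth:
  "(f has_vector_derivative f') F \<Longrightarrow> ((\<lambda>t. f t $ i $ j) has_vector_derivative f' $ i $ j) F"
  by (intro has_vector_derivative_vec_nth)

lemma has_derivative_vec_nth [derivative_intros]: "((\<lambda>x. x $ i) has_derivative (\<lambda>h. h $ i)) F"
  by (rule bounded_linear_imp_has_derivative[OF bounded_linear_vec_nth])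

section \<open>Kronecker products and similar matrices\<close>

lemma matrix_add_rdistrib: "(A + B) ** C = A ** C + B ** (C :: 'a::semiring_1^_^_)"
  by (simp add: matrix_matrix_mult_def vec_eq_iff distrib_right sum.distrib)

lemma matrix_diff_ldistrib: "A ** (B - C) = A ** B - A ** (C :: 'a::ring_1^_^_)"
  by (simp add: matrix_matrix_mult_def vec_eq_iff right_diff_distrib sum_subtractf)

lemma matrix_diff_rdistrib: "(A - B) ** C = A ** C - B ** (C :: 'a::ring_1^_^_)"
  by (simp add: matrix_matrix_mult_def vec_eq_iff left_diff_distrib sum_subtractf)

lemma mat_mult_commute: "mat z ** A = A ** (mat z :: 'a::comm_semiring_1^'n^'n)"
  by (simp add: matrix_matrix_mult_def mat_def vec_eq_iff if_distrib if_distribR mult.commute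
      cong: if_cong)

definition kronecker :: "'a::times^'c1^'r1 \<Rightarrow> 'a^'c2^'r2 \<Rightarrow> 'a^('c1 \<times> 'c2)^('r1 \<times> 'r2)" where
  "kronecker A B = (\<chi> r c. A $ fst r $ fst c * B $ snd r $ snd c)"

lemma kronecker_mult:
  fixes A :: "'a::comm_semiring_1^'c1^'r1" and B :: "'a^'c2^'r2"
    and C :: "'a^'k1^'c1" and D :: "'a^'k2^'c2"
  shows "kronecker A B ** kronecker C D = kronecker (A ** C) (B ** D)"
proof -
  have "(\<Sum>x\<in>UNIV. A$j$fst x * B$k$snd x * (C$fst x$i * D$snd x$l))
     = (\<Sum>j'\<in>UNIV. A$j$j' * C$j'$i) * (\<Sum>k'\<in>UNIV. B$k$k' * D$k'$l)" for j k i l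
  proof -
    have "(\<Sum>x\<in>UNIV. A$j$fst x * B$k$snd x * (C$fst x$i * D$snd x$l))
        = (\<Sum>j'\<in>UNIV. \<Sum>k'\<in>UNIV. (A$j$j' * C$j'$i) * (B$k$k' * D$k'$l))"
      by (simp add: sum.cartesian_product UNIV_Times_UNIV [symmetric] case_prod_beta mult_ac
          del: UNIV_Times_UNIV)
    then show ?thesis by (simp only: sum_product)
  qed
  then show ?thesis
    by (simp add: kronecker_def matrix_matrix_mult_def vec_eq_iff)
qed

lemma kronecker_mat_1:
  "kronecker (mat 1) (mat 1) = (mat 1 :: 'a::semiring_1^('n::finite \<times> 'm::finite)^('n \<times> 'm))"
  by (simp add: kronecker_def mat_def vec_eq_iff prod_eq_iff)

lemma map_matrix_kronecker:
  assumes "\<And>x y. h (x * y) = h x * h y"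
  shows "map_matrix h (kronecker A B) = kronecker (map_matrix h A) (map_matrix h B)"
  by (simp add: kronecker_def vec_eq_iff assms)

lemma has_vector_derivative_kronecker:
  fixes A :: "real \<Rightarrow> real^'c1^'r1" and B :: "real \<Rightarrow> real^'c2^'r2"
  assumes "(A has_vector_derivative A') (at t within S)" and "(B has_vector_derivative B') (at t within S)"
  shows "((\<lambda>t. kronecker (A t) (B t)) has_vector_derivative
           kronecker A' (B t) + kronecker (A t) B') (at t within S)"
  unfolding kronecker_def plus_vec_def vec_lambda_beta
proof (intro has_vector_derivative_vec_lambda)
  fix r :: "'r1 \<times> 'r2" and c :: "'c1 \<times> 'c2"
  show "((\<lambda>t. A t $ fst r $ fst c * B t $ snd r $ snd c) has_vector_derivative
          A' $ fst r $ fst c * B t $ snd r $ snd c + A t $ fst r $ fst c * B' $ snd r $ snd c) (at t within S)"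
    using has_vector_derivative_mult[OF has_vector_derivative_matrix_nth has_vector_derivative_matrix_nth, OF assms]
    by (simp add: add.commute)
qed

definition similar_matrix :: "'a::semiring_1^'n^'n \<Rightarrow> 'a^'n^'n \<Rightarrow> bool" where
  "similar_matrix A B \<longleftrightarrow> (\<exists>P P'. P' ** P = mat 1 \<and> A ** P = P ** B)"

lemma similar_matrix_refl: "similar_matrix A A"
  unfolding similar_matrix_def by (intro exI[of _ "mat 1"]) simp

lemma similar_matrix_kronecker:
  fixes A B :: "'a::comm_semiring_1^'n^'n" and C D :: "'a^'m^'m"
  assumes "similar_matrix A B" and "similar_matrix C D"
  shows "similar_matrix (kronecker A C) (kronecker B D)"
proof -
  obtain P P' Q Q' where "P' ** P = mat 1" "A ** P = P ** B" "Q' ** Q = mat 1" "C ** Q = Q ** D"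
    using assms unfolding similar_matrix_def by blast
  then show ?thesis
    unfolding similar_matrix_def
    by (intro exI[of _ "kronecker P Q"] exI[of _ "kronecker P' Q'"]) (simp add: kronecker_mult kronecker_mat_1)
qed

lemma det_mat_diff_similar:
  fixes A B :: "'a::comm_ring_1^'n^'n"
  assumes "similar_matrix A B"
  shows "det (mat z - A) = det (mat z - B)"
proof -
  obtain P P' where inv: "P' ** P = mat 1" and sim: "A ** P = P ** B"
    using assms unfolding similar_matrix_def by blast
  have "(mat z - A) ** P = P ** (mat z - B)"
    by (simp add: matrix_diff_ldistrib matrix_diff_rdistrib sim mat_mult_commute)
  then have "det P' * det (mat z - A) * det P = det P' * det P * det (mat z - B)"
    by (metis det_mul mult.assoc)
  moreover have "det P' * det P = 1"
    using inv by (metis det_I det_mul)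
  ultimately show ?thesis
    by (metis mult.commute mult.left_commute mult_1_right)
qed

section \<open>Triangular forms and characteristic polynomials\<close>

text \<open>Upper triangular with respect to the order of indices induced by some injective ranking
  \<open>r\<close>; index types such as \<open>'n \<times> 2\<close> carry no order of their own.\<close>
definition perm_upper_triangular :: "'a::zero^'n^'n \<Rightarrow> bool" where
  "perm_upper_triangular A \<longleftrightarrow> (\<exists>r :: 'n \<Rightarrow> nat. inj r \<and> (\<forall>i j. r j < r i \<longrightarrow> A $ i $ j = 0))"

lemma det_perm_upper_triangular:
  fixes A :: "'a::comm_ring_1^'n::finite^'n"
  assumes "perm_upper_triangular A"
  shows "det A = (\<Prod>i\<in>UNIV. A $ i $ i)"
proof -
  obtain r :: "'n \<Rightarrow> nat" where inj: "inj r" and zero: "\<And>i j. r j < r i \<Longrightarrow> A $ i $ j = 0"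
    using assms unfolding perm_upper_triangular_def by blast
  have "of_int (sign p) * (\<Prod>i\<in>UNIV. A $ i $ p i) = 0" if "p permutes UNIV" "p \<noteq> id" for p
  proof -
    have "\<exists>i. r (p i) < r i"
    proof (rule ccontr)
      assume "\<not> ?thesis"
      then have le: "\<And>i. r i \<le> r (p i)" by (simp add: not_less)
      have "(\<Sum>i\<in>UNIV. r (p i)) = (\<Sum>i\<in>UNIV. r i)"
        using sum.permute[OF \<open>p permutes UNIV\<close>, of r] by (simp add: comp_def)
      then have "\<forall>i\<in>UNIV. r i = r (p i)"
        using sum_mono_inv[of r UNIV "\<lambda>i. r (p i)"] le by auto
      then have "p = id" using inj by (auto simp: inj_def fun_eq_iff)
      with \<open>p \<noteq> id\<close> show False ..
    qed
    then obtain i where "A $ i $ p i = 0" using zero by blast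
    then have "(\<Prod>i\<in>UNIV. A $ i $ p i) = 0" by (intro prod_zero) auto
    then show ?thesis by simp
  qed
  then have "det A = (\<Sum>p\<in>{id}. of_int (sign p) * (\<Prod>i\<in>UNIV. A $ i $ p i))"
    unfolding det_def by (intro sum.mono_neutral_right) (auto simp: permutes_id)
  then show ?thesis by (simp add: sign_id)
qed

lemma perm_upper_triangular_mat_diff:
  "perm_upper_triangular A \<Longrightarrow> perm_upper_triangular (mat z - A :: 'a::ab_group_add^'n^'n)"
  unfolding perm_upper_triangular_def by (fastforce simp: mat_def)

lemma perm_upper_triangular_kronecker:
  fixes A :: "'a::mult_zero^'n::finite^'n" and B :: "'a^'m::finite^'m"
  assumes "perm_upper_triangular A" and "perm_upper_triangular B"
  shows "perm_upper_triangular (kronecker A B)"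
proof -
  obtain r :: "'n \<Rightarrow> nat" where r: "inj r" "\<And>i j. r j < r i \<Longrightarrow> A $ i $ j = 0"
    using assms(1) unfolding perm_upper_triangular_def by blast
  obtain s :: "'m \<Rightarrow> nat" where s: "inj s" "\<And>i j. s j < s i \<Longrightarrow> B $ i $ j = 0"
    using assms(2) unfolding perm_upper_triangular_def by blast
  define M where "M = Suc (Max (range s))"
  have s_less: "s k < M" for k
    unfolding M_def by (simp add: le_imp_less_Suc)
  define rs where "rs = (\<lambda>(j, k). r j * M + s k)"
  \<comment> \<open>lexicographic order: first by the rank of the block, then within the block\<close>
  have lex: "r j < r j' \<or> (j = j' \<and> s k < s k')" if "rs (j, k) < rs (j', k')" for j k j' k'
  proof (cases "r j < r j'")
    case False
    have "\<not> r j' < r j"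
    proof
      assume "r j' < r j"
      then have "r j' * M + M \<le> r j * M"
        by (metis Suc_leI add.commute mult_Suc mult_le_mono1)
      then show False using that s_less[of k'] unfolding rs_def by simp
    qed
    with False have "r j = r j'" by simp
    then show ?thesis using that r(1) unfolding rs_def by (auto dest: injD)
  qed simp
  have "rs (j, k) div M = r j" "rs (j, k) mod M = s k" for j k
    using s_less[of k] unfolding rs_def by simp_all
  then have "inj rs"
    using r(1) s(1) by (metis injD injI surj_pair)
  moreover have "kronecker A B $ x $ y = 0" if "rs y < rs x" for x y
    using lex[of "fst y" "snd y" "fst x" "snd x"] that r(2) s(2)
    by (cases x; cases y) (auto simp: kronecker_def)
  ultimately show ?thesis
    unfolding perm_upper_triangular_def by blast
qed

lemma similar_upper_triangular_2x2:
  fixes F :: "'a::field^2^2"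
  assumes "det (mat x - F) = 0"
  shows "\<exists>D. similar_matrix F D \<and> D $ 2 $ 1 = 0"
proof (cases "F $ 2 $ 1 = 0")
  case True
  then show ?thesis using similar_matrix_refl by blast
next
  case False
  \<comment> \<open>the first column of \<open>S\<close> is an eigenvector for \<open>x\<close>\<close>
  define S :: "'a^2^2" where "S = vector [vector [x - F$2$2, 1], vector [F$2$1, 0]]"
  define S' :: "'a^2^2" where "S' = vector [vector [0, 1 / F$2$1], vector [1, - (x - F$2$2) / F$2$1]]"
  define D :: "'a^2^2" where "D = vector [vector [x, 1], vector [0, F$1$1 + F$2$2 - x]]"
  have char: "(x - F$1$1) * (x - F$2$2) - F$1$2 * F$2$1 = 0"
    using assms by (simp add: det_2 mat_def)
  have "S' ** S = mat 1"
    using False by (simp add: S_def S'_def matrix_matrix_mult_def mat_def vec_eq_iff forall_2 sum_2)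
  moreover have "F ** S = S ** D"
    using char by (simp add: S_def D_def matrix_matrix_mult_def vec_eq_iff forall_2 sum_2 algebra_simps)
  ultimately show ?thesis
    unfolding similar_matrix_def by (intro exI[of _ D]) (auto simp: D_def)
qed

lemma perm_upper_triangular_2x2: "D $ 2 $ 1 = 0 \<Longrightarrow> perm_upper_triangular (D :: 'a::zero^2^2)"
  unfolding perm_upper_triangular_def
  by (rule exI[of _ "\<lambda>k. if k = 1 then 0 else 1"]) (auto simp: inj_def forall_2)

lemma similar_upper_triangular_diag_plus_const:
  fixes a b :: "'a::comm_ring_1" and j0 :: "'n::finite"
  shows "\<exists>T. similar_matrix (\<chi> j i. (if j = i then a else 0) + b) T \<and> perm_upper_triangular T
           \<and> (\<forall>j. T $ j $ j = (if j = j0 then a + of_nat CARD('n) * b else a))"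
proof -
  \<comment> \<open>\<open>Q\<close> replaces the \<open>j0\<close>-th standard basis vector by the all-ones eigenvector\<close>
  define Q :: "'a^'n^'n" where "Q = (\<chi> j m. if m = j0 \<or> j = m then 1 else 0)"
  define Q' :: "'a^'n^'n" where "Q' = (\<chi> j m. (if j = m then 1 else 0) - (if m = j0 \<and> j \<noteq> j0 then 1 else 0))"
  define T :: "'a^'n^'n" where
    "T = (\<chi> j m. (if j = m then a else 0) + (if j = j0 then (if m = j0 then of_nat CARD('n) * b else b) else 0))"
  have Q'_mult: "(Q' ** X) $ j $ i = X $ j $ i - (if j \<noteq> j0 then X $ j0 $ i else 0)" for X j i
  proof -
    have "(Q' ** X) $ j $ i = (\<Sum>m\<in>UNIV. (if m = j then X $ m $ i else 0)
                                         - (if m = j0 \<and> j \<noteq> j0 then X $ m $ i else 0))"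
      unfolding matrix_matrix_mult_def Q'_def by (auto intro!: sum.cong)
    then show ?thesis by (simp add: sum_subtractf)
  qed
  have Q_mult: "(Q ** X) $ j $ i = X $ j0 $ i + (if j \<noteq> j0 then X $ j $ i else 0)" for X j i
  proof -
    have "(Q ** X) $ j $ i = (\<Sum>m\<in>UNIV. (if m = j0 then X $ m $ i else 0)
                                         + (if m = j \<and> j \<noteq> j0 then X $ m $ i else 0))"
      unfolding matrix_matrix_mult_def Q_def by (auto intro!: sum.cong)
    then show ?thesis by (simp add: sum.distrib)
  qed
  have mult_Q: "(X ** Q) $ j $ i = (if i = j0 then (\<Sum>m\<in>UNIV. X $ j $ m) else X $ j $ i)" for X j i
  proof -
    have "(X ** Q) $ j $ i = (\<Sum>m\<in>UNIV. if i = j0 \<or> m = i then X $ j $ m else 0)"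
      unfolding matrix_matrix_mult_def Q_def by (auto intro!: sum.cong)
    then show ?thesis by (auto intro: sum.cong)
  qed
  have "Q' ** Q = mat 1"
    by (auto simp: vec_eq_iff Q'_mult Q_def mat_def)
  moreover have "(\<chi> j i. (if j = i then a else 0) + b) ** Q = Q ** T"
    by (auto simp: vec_eq_iff Q_mult mult_Q T_def sum.distrib)
  moreover obtain h :: "'n \<Rightarrow> nat" where "inj h"
    using finite_imp_inj_to_nat_seg[of "UNIV :: 'n set"] by blast
  then have "perm_upper_triangular T"
    unfolding perm_upper_triangular_def
    by (intro exI[of _ "\<lambda>j. if j = j0 then 0 else Suc (h j)"]) (auto simp: inj_def T_def)
  ultimately show ?thesis
    unfolding similar_matrix_def by (intro exI[of _ T]) (auto simp: T_def)
qed

lemma char_det_eq: "char_det M z = det (mat z - map_matrix complex_of_real M)"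
  unfolding char_det_def by (rule arg_cong[where f = det]) (simp add: mat_def vec_eq_iff)

lemma monic_quadratic_scale_roots:
  fixes x1 x2 y1 y2 :: "'a::comm_ring_1"
  assumes "\<And>z. (z - x1) * (z - x2) = (z - y1) * (z - y2)"
  shows "(z - t * x1) * (z - t * x2) = (z - t * y1) * (z - t * y2)"
proof -
  have prod: "x1 * x2 = y1 * y2" using assms[of 0] by simp
  moreover have "x1 + x2 = y1 + y2" using assms[of 1] prod by (simp add: algebra_simps)
  ultimately have "z * z - t * (x1 + x2) * z + t * t * (x1 * x2) = z * z - t * (y1 + y2) * z + t * t * (y1 * y2)"
    by simp
  then show ?thesis by (simp add: algebra_simps)
qed

lemma char_det_kronecker_2x2:
  fixes E :: "real^'n::finite^'n" and F :: "real^2^2"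
  assumes E: "E = (\<chi> j i. (if j = i then a else 0) + b)"
    and F: "\<And>z. char_det F z = (z - \<mu>) * (z - \<nu>)"
  defines "c \<equiv> complex_of_real (a + real CARD('n) * b)"
  shows "char_det (kronecker E F) z
           = (z - c * \<mu>) * (z - c * \<nu>) * ((z - of_real a * \<mu>) * (z - of_real a * \<nu>)) ^ (CARD('n) - 1)"
proof -
  fix j0 :: 'n
  have "map_matrix complex_of_real E = (\<chi> j i. (if j = i then of_real a else 0) + of_real b)"
    by (simp add: E vec_eq_iff)
  moreover have "c = of_real a + of_nat CARD('n) * of_real b"
    by (simp add: c_def)
  ultimately obtain T where simT: "similar_matrix (map_matrix complex_of_real E) T"
    and triT: "perm_upper_triangular T" and diagT: "\<And>j. T $ j $ j = (if j = j0 then c else of_real a)"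
    using similar_upper_triangular_diag_plus_const[of "of_real a" "of_real b" j0] by metis
  obtain D where simD: "similar_matrix (map_matrix complex_of_real F) D" and D21: "D $ 2 $ 1 = 0"
    using similar_upper_triangular_2x2[of \<mu>] F[of \<mu>] by (auto simp: char_det_eq)
  have "(z - D $ 1 $ 1) * (z - D $ 2 $ 2) = (z - \<mu>) * (z - \<nu>)" for z
    using det_mat_diff_similar[OF simD, of z] F[of z] D21 by (simp add: char_det_eq det_2 mat_def)
  then have diagD: "(z - t * D $ 1 $ 1) * (z - t * D $ 2 $ 2) = (z - t * \<mu>) * (z - t * \<nu>)" for t
    by (rule monic_quadratic_scale_roots)
  have "char_det (kronecker E F) z = det (mat z - kronecker T D)"
    unfolding char_det_eq map_matrix_kronecker[OF of_real_mult]
    by (intro det_mat_diff_similar similar_matrix_kronecker simT simD)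
  also have "\<dots> = (\<Prod>r\<in>UNIV. z - T $ fst r $ fst r * D $ snd r $ snd r)"
    by (simp add: det_perm_upper_triangular perm_upper_triangular_mat_diff perm_upper_triangular_kronecker
        perm_upper_triangular_2x2 triT D21) (simp add: mat_def kronecker_def)
  also have "\<dots> = (\<Prod>j\<in>UNIV. \<Prod>k\<in>UNIV. z - T $ j $ j * D $ k $ k)"
    unfolding prod.cartesian_product by (simp add: case_prod_beta)
  also have "\<dots> = (\<Prod>j\<in>UNIV. (z - T $ j $ j * D $ 1 $ 1) * (z - T $ j $ j * D $ 2 $ 2))"
    by (simp add: UNIV_2)
  also have "\<dots> = (\<Prod>j\<in>UNIV. (z - T $ j $ j * \<mu>) * (z - T $ j $ j * \<nu>))"
    by (simp only: diagD)
  also have "\<dots> = (z - c * \<mu>) * (z - c * \<nu>) * (\<Prod>j\<in>UNIV - {j0}. (z - of_real a * \<mu>) * (z - of_real a * \<nu>))"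
    by (simp add: prod.remove[of UNIV j0] diagT)
  also have "\<dots> = (z - c * \<mu>) * (z - c * \<nu>) * ((z - of_real a * \<mu>) * (z - of_real a * \<nu>)) ^ (CARD('n) - 1)"
    by (simp add: card_Diff_singleton)
  finally show ?thesis .
qed

section \<open>Linearisation of the patch model along a synchronous solution\<close>

definition coupling_matrix :: "real \<Rightarrow> real^'n::finite^'n" where
  "coupling_matrix s = (\<chi> j i. s - (if j = i then real CARD('n) * s else 0))"

text \<open>The matrix exponential of \<open>t \<cdot> coupling_matrix s\<close>.\<close>
definition coupling_propagator :: "real \<Rightarrow> real \<Rightarrow> real^'n::finite^'n" where
  "coupling_propagator s t = (\<chi> j i. (if j = i then exp (- real CARD('n) * s * t) else 0)
                                     + (1 - exp (- real CARD('n) * s * t)) / real CARD('n))"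

lemma coupling_propagator_0: "coupling_propagator s 0 = mat 1"
  by (simp add: coupling_propagator_def mat_def vec_eq_iff)

lemma coupling_propagator_has_vector_derivative:
  "(coupling_propagator s has_vector_derivative
     coupling_matrix s ** (coupling_propagator s t :: real^'n::finite^'n)) (at t)"
proof -
  let ?N = "real CARD('n)" and ?e = "\<lambda>t. exp (- real CARD('n) * s * t)"
  have col_sum: "(\<Sum>m\<in>UNIV. coupling_propagator s t $ m $ i :: real) = 1" for i :: 'n
    by (simp add: coupling_propagator_def sum.distrib)
  have "(coupling_matrix s ** (coupling_propagator s t :: real^'n^'n)) $ j $ i
          = s * ?e t - (if j = i then ?N * s * ?e t else 0)" for j i
  proof -
    have "(coupling_matrix s ** (coupling_propagator s t :: real^'n^'n)) $ j $ i
       = (\<Sum>m\<in>UNIV. s * coupling_propagator s t $ m $ i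
                       - (if m = j then ?N * s * coupling_propagator s t $ m $ i else 0))"
      by (auto simp: coupling_matrix_def matrix_matrix_mult_def algebra_simps intro!: sum.cong)
    also have "\<dots> = s * (\<Sum>m\<in>UNIV. coupling_propagator s t $ m $ i) - ?N * s * coupling_propagator s t $ j $ i"
      by (simp add: sum_subtractf sum_distrib_left)
    also have "\<dots> = s * ?e t - (if j = i then ?N * s * ?e t else 0)"
      unfolding col_sum by (simp add: coupling_propagator_def field_simps)
    finally show ?thesis .
  qed
  then have "coupling_matrix s ** (coupling_propagator s t :: real^'n^'n)
               = (\<chi> j i. s * ?e t - (if j = i then ?N * s * ?e t else 0))"
    by (simp add: vec_eq_iff)
  moreover have "((\<lambda>t. (if j = i then ?e t else 0) + (1 - ?e t) / ?N) has_real_derivative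
                   s * ?e t - (if j = i then ?N * s * ?e t else 0)) (at t)" for j i :: 'n
    by (cases "j = i") (auto intro!: derivative_eq_intros)
  ultimately show ?thesis
    unfolding coupling_propagator_def [abs_def] has_real_derivative_iff_has_vector_derivative
    by (auto intro!: has_vector_derivative_vec_lambda)
qed

lemma C1_fun3_differentiable_slice:
  assumes "C1_fun3 f"
  shows "(\<lambda>x :: real^2. f (x$1) (x$2) \<alpha>) differentiable (at y)"
proof -
  obtain D :: "real^3 \<Rightarrow> ((real^3) \<Rightarrow>\<^sub>L real)"
    where D: "\<And>x. ((\<lambda>y. f (y$1) (y$2) (y$3)) has_derivative blinfun_apply (D x)) (at x)"
    using assms unfolding C1_fun3_def by blast
  define c :: "real^2 \<Rightarrow> real^3" where "c x = (\<chi> i. if i = 1 then x$1 else if i = 2 then x$2 else \<alpha>)" for x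
  have "(c has_derivative (\<lambda>h. \<chi> i. if i = 1 then h$1 else if i = 2 then h$2 else 0)) (at y)"
    unfolding c_def
  proof (intro has_derivative_vec_lambda)
    fix i :: 3
    show "((\<lambda>x. if i = 1 then x$1 else if i = 2 then x$2 else \<alpha>) has_derivative
            (\<lambda>h. if i = 1 then h$1 else if i = 2 then h$2 else 0)) (at y)"
      by (cases "i = 1"; cases "i = 2") (auto intro!: derivative_eq_intros)
  qed
  then have "((\<lambda>y. f (y$1) (y$2) (y$3)) \<circ> c) differentiable (at y)"
    using D by (meson differentiable_chain_at differentiable_def)
  moreover have "(\<lambda>y. f (y$1) (y$2) (y$3)) \<circ> c = (\<lambda>x. f (x$1) (x$2) \<alpha>)"
    by (simp add: c_def fun_eq_iff)
  ultimately show ?thesis by simp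
qed

lemma vector_2_eq_vec_lambda: "(vector [a, b] :: 'a::zero^2) = (\<chi> i. if i = 1 then a else b)"
  by (simp add: vec_eq_iff forall_2)

lemma kinetic_field_differentiable:
  assumes "C1_fun3 f" and "C1_fun3 g"
  shows "kinetic_field f g \<alpha> differentiable (at y)"
proof -
  obtain f' where f': "((\<lambda>x :: real^2. f (x$1) (x$2) \<alpha>) has_derivative f') (at y)"
    using C1_fun3_differentiable_slice[OF assms(1)] unfolding differentiable_def by blast
  obtain g' where g': "((\<lambda>x :: real^2. g (x$1) (x$2) \<alpha>) has_derivative g') (at y)"
    using C1_fun3_differentiable_slice[OF assms(2)] unfolding differentiable_def by blast
  have "((\<lambda>x. \<chi> i::2. if i = 1 then f (x$1) (x$2) \<alpha> else g (x$1) (x$2) \<alpha>)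
              has_derivative (\<lambda>h. \<chi> i. if i = 1 then f' h else g' h)) (at y)"
  proof (intro has_derivative_vec_lambda)
    show "((\<lambda>x. if i = 1 then f (x$1) (x$2) \<alpha> else g (x$1) (x$2) \<alpha>) has_derivative
            (\<lambda>h. if i = 1 then f' h else g' h)) (at y)" for i :: 2
      using f' g' by (cases "i = 1") simp_all
  qed
  then show ?thesis
    unfolding differentiable_def kinetic_field_def [abs_def] vector_2_eq_vec_lambda by blast
qed

definition patch_state :: "'n \<Rightarrow> real^('n::finite \<times> 2) \<Rightarrow> real^2" where
  "patch_state j x = (\<chi> k. x $ (j, k))"

lemma patch_field_eq:
  "patch_field \<delta> d0 f g \<alpha> x = (\<chi> r. \<delta> * d0 * (\<Sum>i\<in>UNIV. x $ (i, snd r) - x $ (fst r, snd r))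
                                  + kinetic_field f g \<alpha> (patch_state (fst r) x) $ snd r)"
proof -
  have "k \<noteq> 1 \<Longrightarrow> k = 2" for k :: 2 using exhaust_2 by blast
  then show ?thesis
    unfolding patch_field_def kinetic_field_def patch_state_def vector_2_eq_vec_lambda
    by (auto simp: vec_eq_iff Let_def)
qed

lemma patch_field_has_derivative:
  fixes x :: "real^('n::finite \<times> 2)"
  assumes "C1_fun3 f" and "C1_fun3 g"
  shows "(patch_field \<delta> d0 f g \<alpha> has_derivative
          (\<lambda>h. \<chi> r. \<delta> * d0 * (\<Sum>i\<in>UNIV. h $ (i, snd r) - h $ (fst r, snd r))
             + frechet_derivative (kinetic_field f g \<alpha>) (at (patch_state (fst r) x))
                 (patch_state (fst r) h) $ snd r)) (at x)"
  unfolding patch_field_eq [abs_def]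
proof (intro has_derivative_vec_lambda)
  fix r :: "'n \<times> 2"
  have "(patch_state (fst r) has_derivative patch_state (fst r)) (at x)"
    unfolding patch_state_def by (intro has_derivative_vec_lambda has_derivative_vec_nth)
  then have "(kinetic_field f g \<alpha> \<circ> patch_state (fst r) has_derivative
               frechet_derivative (kinetic_field f g \<alpha>) (at (patch_state (fst r) x)) \<circ> patch_state (fst r)) (at x)"
    using kinetic_field_differentiable[OF assms] frechet_derivative_works by (blast intro: diff_chain_at)
  from bounded_linear.has_derivative[OF bounded_linear_vec_nth this]
  have kinetic: "((\<lambda>x. kinetic_field f g \<alpha> (patch_state (fst r) x) $ snd r) has_derivative
          (\<lambda>h. frechet_derivative (kinetic_field f g \<alpha>) (at (patch_state (fst r) x))
                 (patch_state (fst r) h) $ snd r)) (at x)"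
    by (simp add: o_def)
  show "((\<lambda>x. \<delta> * d0 * (\<Sum>i\<in>UNIV. x $ (i, snd r) - x $ (fst r, snd r))
              + kinetic_field f g \<alpha> (patch_state (fst r) x) $ snd r) has_derivative
         (\<lambda>h. \<delta> * d0 * (\<Sum>i\<in>UNIV. h $ (i, snd r) - h $ (fst r, snd r))
              + frechet_derivative (kinetic_field f g \<alpha>) (at (patch_state (fst r) x))
                  (patch_state (fst r) h) $ snd r)) (at x)"
    by (intro has_derivative_add kinetic has_derivative_mult_right has_derivative_sum has_derivative_diff
        has_derivative_vec_nth)
qed

lemma patch_state_synchronous: "patch_state j (synchronous \<psi> t) = \<psi> t"
  by (simp add: patch_state_def synchronous_def vec_eq_iff)

lemma frechet_derivative_patch_field_synchronous:
  assumes "C1_fun3 f" and "C1_fun3 g"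
  shows "frechet_derivative (patch_field \<delta> d0 f g \<alpha> :: real^('n::finite \<times> 2) \<Rightarrow> _) (at (synchronous \<psi> t))
    = (\<lambda>h. \<chi> r. \<delta> * d0 * (\<Sum>i\<in>UNIV. h $ (i, snd r) - h $ (fst r, snd r))
         + frechet_derivative (kinetic_field f g \<alpha>) (at (\<psi> t)) (patch_state (fst r) h) $ snd r)"
  using frechet_derivative_at[OF patch_field_has_derivative[OF assms, of \<delta> d0 \<alpha> "synchronous \<psi> t"], symmetric]
  by (simp add: patch_state_synchronous)

lemma jacobian_patch_field_synchronous:
  assumes "C1_fun3 f" and "C1_fun3 g"
  shows "matrix (frechet_derivative (patch_field \<delta> d0 f g \<alpha> :: real^('n::finite \<times> 2) \<Rightarrow> _)
                   (at (synchronous \<psi> t)))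
     = kronecker (coupling_matrix (\<delta> * d0)) (mat 1)
       + kronecker (mat 1) (matrix (frechet_derivative (kinetic_field f g \<alpha>) (at (\<psi> t))))"
    (is "matrix ?J = ?M")
proof -
  let ?K = "frechet_derivative (kinetic_field f g \<alpha>) (at (\<psi> t))"
  have "linear ?K"
    using kinetic_field_differentiable[OF assms] frechet_derivative_works has_derivative_linear by blast
  have axis_sum: "(\<Sum>i'\<in>UNIV. axis (i, l) 1 $ (i', k) - axis (i, l) 1 $ (j, k))
          = (if k = l then 1 else 0) - real CARD('n) * (if j = i \<and> k = l then 1 else 0)"
    for i j :: 'n and k l :: 2
    by (simp add: sum_subtractf axis_def)
  have axis_state: "patch_state j (axis (i, l) 1) = (if i = j then axis l 1 else 0)" for i j :: 'n and l :: 2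
    by (auto simp: patch_state_def axis_def vec_eq_iff)
  have "matrix ?J $ (j, k) $ (i, l) = ?M $ (j, k) $ (i, l)" for i j :: 'n and k l :: 2
  proof -
    have "matrix ?J $ (j, k) $ (i, l)
        = \<delta> * d0 * (\<Sum>i'\<in>UNIV. axis (i, l) 1 $ (i', k) - axis (i, l) 1 $ (j, k))
          + ?K (patch_state j (axis (i, l) 1)) $ k"
      by (simp add: frechet_derivative_patch_field_synchronous[OF assms] matrix_def)
    also have "\<dots> = ?M $ (j, k) $ (i, l)"
      unfolding axis_sum axis_state
      by (auto simp: kronecker_def coupling_matrix_def mat_def matrix_def linear_0[OF \<open>linear ?K\<close>] algebra_simps)
    finally show ?thesis .
  qed
  then show ?thesis
    by (simp add: vec_eq_iff split_paired_All)
qed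

lemma fundamental_matrix_patch_field:
  assumes "C1_fun3 f" and "C1_fun3 g" and "fundamental_matrix (kinetic_field f g \<alpha>) \<psi> \<Phi>"
  shows "fundamental_matrix (patch_field \<delta> d0 f g \<alpha> :: real^('n::finite \<times> 2) \<Rightarrow> _) (synchronous \<psi>)
           (\<lambda>t. kronecker (coupling_propagator (\<delta> * d0) t) (\<Phi> t))"
  unfolding fundamental_matrix_def
proof (intro conjI allI)
  show "kronecker (coupling_propagator (\<delta> * d0) 0) (\<Phi> 0) = (mat 1 :: real^('n \<times> 2)^('n \<times> 2))"
    using assms(3) by (simp add: fundamental_matrix_def coupling_propagator_0 kronecker_mat_1)
next
  fix t
  let ?A = "matrix (frechet_derivative (kinetic_field f g \<alpha>) (at (\<psi> t)))"
    and ?E = "coupling_propagator (\<delta> * d0) :: real \<Rightarrow> real^'n^'n"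
  have "(\<Phi> has_vector_derivative ?A ** \<Phi> t) (at t)"
    using assms(3) by (simp add: fundamental_matrix_def)
  from has_vector_derivative_kronecker[OF coupling_propagator_has_vector_derivative this]
  show "((\<lambda>t. kronecker (?E t) (\<Phi> t)) has_vector_derivative
          matrix (frechet_derivative (patch_field \<delta> d0 f g \<alpha>) (at (synchronous \<psi> t)))
          ** kronecker (?E t) (\<Phi> t)) (at t)"
    by (simp add: jacobian_patch_field_synchronous[OF assms(1,2)] matrix_add_rdistrib kronecker_mult)
qed

lemma floquet_char_patch_field_synchronous:
  fixes \<delta> d0 :: real
  assumes "C1_fun3 f" and "C1_fun3 g"
    and "floquet_char (kinetic_field f g \<alpha>) \<psi> p (\<lambda>z. (z - \<mu>) * (z - \<nu>))"
  defines "a \<equiv> exp (- real CARD('n) * (\<delta> * d0) * p)"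
  shows "floquet_char (patch_field \<delta> d0 f g \<alpha> :: real^('n::finite \<times> 2) \<Rightarrow> _) (synchronous \<psi>) p
           (\<lambda>z. (z - \<mu>) * (z - \<nu>) * ((z - of_real a * \<mu>) * (z - of_real a * \<nu>)) ^ (CARD('n) - 1))"
proof -
  obtain \<Phi> where \<Phi>: "fundamental_matrix (kinetic_field f g \<alpha>) \<psi> \<Phi>"
    and char: "\<And>z. char_det (\<Phi> p) z = (z - \<mu>) * (z - \<nu>)"
    using assms(3) unfolding floquet_char_def by blast
  have "(coupling_propagator (\<delta> * d0) p :: real^'n^'n)
          = (\<chi> j i. (if j = i then a else 0) + (1 - a) / real CARD('n))"
    unfolding coupling_propagator_def a_def ..
  from char_det_kronecker_2x2[OF this char]
  have "char_det (kronecker (coupling_propagator (\<delta> * d0) p :: real^'n^'n) (\<Phi> p)) z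
          = (z - \<mu>) * (z - \<nu>) * ((z - of_real a * \<mu>) * (z - of_real a * \<nu>)) ^ (CARD('n) - 1)" for z
    by simp
  then show ?thesis
    unfolding floquet_char_def using fundamental_matrix_patch_field[OF assms(1,2) \<Phi>] by blast
qed

theorem proposition3p3:
  fixes f g :: "real \<Rightarrow> real \<Rightarrow> real \<Rightarrow> real"
    and \<psi> :: "real \<Rightarrow> real^2"
    and d0 \<alpha>0 p \<gamma>t :: real
  assumes n2: "CARD('n::finite) \<ge> 2"
    and d0: "d0 > 0"
    and smooth_f: "C1_fun3 f" and smooth_g: "C1_fun3 g"
    and per: "periodic_solution (kinetic_field f g \<alpha>0) \<psi> p"
    and stable: "floquet_stable (kinetic_field f g \<alpha>0) \<psi> p"
    and mult: "floquet_char (kinetic_field f g \<alpha>0) \<psi> p (\<lambda>z. (z - 1) * (z - complex_of_real \<gamma>t))"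
    and \<gamma>t: "0 < \<gamma>t" "\<gamma>t < 1"
  shows "\<exists>\<delta>1>0. \<forall>\<delta>. 0 < \<delta> \<and> \<delta> < \<delta>1 \<longrightarrow>
           floquet_stable (patch_field \<delta> d0 f g \<alpha>0 :: real^('n \<times> 2) \<Rightarrow> real^('n \<times> 2))
                          (synchronous \<psi>) p"
proof (intro exI[of _ 1] conjI allI impI)
  fix \<delta> :: real
  assume "0 < \<delta> \<and> \<delta> < 1"
  define a where "a = exp (- real CARD('n) * (\<delta> * d0) * p)"
  have a: "0 < a" "a < 1"
    using \<open>0 < \<delta> \<and> \<delta> < 1\<close> d0 per n2 by (auto simp: a_def periodic_solution_def)
  define q :: "complex poly" where
    "q = [:- of_real \<gamma>t, 1:] * ([:- of_real a, 1:] * [:- of_real (a * \<gamma>t), 1:]) ^ (CARD('n) - 1)"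
  have poly_q: "poly q z = (z - of_real \<gamma>t) * ((z - of_real a) * (z - of_real a * of_real \<gamma>t)) ^ (CARD('n) - 1)"
    for z
    unfolding q_def poly_mult poly_power by simp
  have "floquet_char (patch_field \<delta> d0 f g \<alpha>0 :: real^('n \<times> 2) \<Rightarrow> _) (synchronous \<psi>) p (\<lambda>z. (z - 1) * poly q z)"
    using floquet_char_patch_field_synchronous[OF smooth_f smooth_g mult, of \<delta> d0]
    unfolding poly_q a_def by (simp add: mult.assoc)
  moreover have "cmod z < 1" if "poly q z = 0" for z
    using that a \<gamma>t mult_strict_mono[OF a(2) \<gamma>t(2)] by (auto simp: poly_q norm_mult)
  ultimately show "floquet_stable (patch_field \<delta> d0 f g \<alpha>0 :: real^('n \<times> 2) \<Rightarrow> _) (synchronous \<psi>) p"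
    unfolding floquet_stable_def by blast
qed simp

end
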